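(* Let $\mathcal{X}$ be a finite set, $\pi$ a probability mass function on $\mathcal{X}$ with full support, and let a group $\mathcal{G}$ act on $\mathcal{X}$. Let $G$, $M$, $B$ be the Gibbs, Metropolis–Hastings and Barker orbit kernels for this same action. Then $GM=MG=BG=GB=G$.
   Context: With $\mathcal{O}(x)$ the orbit of $x$ and $\pi(A)=\sum_{z\in A}\pi(z)$: $G(x,y)=\pi(y)/\pi(\mathcal{O}(x))$ for $y\in\mathcal{O}(x)$ and $0$ otherwise; $M(x,y)=\frac{1}{|\mathcal{O}(x)|-1}\min\{1,\pi(y)/\pi(x)\}$ for $y\in\mathcal{O}(x)\setminus\{x\}$, $0$ for $y\notin\mathcal{O}(x)$, and $M(x,x)=1-\sum_{y\ne x}M(x,y)$ (so $M(x,x)=1$ for singleton orbits); $B$ is defined like $M$ with acceptance $\pi(y)/(\pi(x)+\pi(y))$. *)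

theory Defs
  imports "HOL-Analysis.Analysis" "HOL-Algebra.Group_Action"
begin

text \<open>Markov kernels on a finite state space X are represented as functions
  'b \<Rightarrow> 'b \<Rightarrow> real; only their values on X \<times> X matter.\<close>

definition kernel_mult :: "'b set \<Rightarrow> ('b \<Rightarrow> 'b \<Rightarrow> real) \<Rightarrow> ('b \<Rightarrow> 'b \<Rightarrow> real) \<Rightarrow> 'b \<Rightarrow> 'b \<Rightarrow> real" where
  "kernel_mult X K L x z = (\<Sum>y\<in>X. K x y * L y z)"

definition gibbs_kernel :: "_ \<Rightarrow> ('a \<Rightarrow> 'b \<Rightarrow> 'b) \<Rightarrow> ('b \<Rightarrow> real) \<Rightarrow> 'b \<Rightarrow> 'b \<Rightarrow> real" where
  "gibbs_kernel G \<phi> \<pi> x y =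
     (if y \<in> orbit G \<phi> x then \<pi> y / (\<Sum>z\<in>orbit G \<phi> x. \<pi> z) else 0)"

definition orbit_offdiag :: "_ \<Rightarrow> ('a \<Rightarrow> 'b \<Rightarrow> 'b) \<Rightarrow> ('b \<Rightarrow> 'b \<Rightarrow> real) \<Rightarrow> 'b \<Rightarrow> 'b \<Rightarrow> real" where
  "orbit_offdiag G \<phi> acc x y =
     (if y \<in> orbit G \<phi> x - {x}
      then 1 / (real (card (orbit G \<phi> x)) - 1) * acc x y else 0)"

definition orbit_kernel :: "_ \<Rightarrow> ('a \<Rightarrow> 'b \<Rightarrow> 'b) \<Rightarrow> ('b \<Rightarrow> 'b \<Rightarrow> real) \<Rightarrow> 'b \<Rightarrow> 'b \<Rightarrow> real" where
  "orbit_kernel G \<phi> acc x y =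
     (if y = x then 1 - (\<Sum>w\<in>orbit G \<phi> x - {x}. orbit_offdiag G \<phi> acc x w)
      else orbit_offdiag G \<phi> acc x y)"

definition mh_kernel :: "_ \<Rightarrow> ('a \<Rightarrow> 'b \<Rightarrow> 'b) \<Rightarrow> ('b \<Rightarrow> real) \<Rightarrow> 'b \<Rightarrow> 'b \<Rightarrow> real" where
  "mh_kernel G \<phi> \<pi> = orbit_kernel G \<phi> (\<lambda>x y. min 1 (\<pi> y / \<pi> x))"

definition barker_kernel :: "_ \<Rightarrow> ('a \<Rightarrow> 'b \<Rightarrow> 'b) \<Rightarrow> ('b \<Rightarrow> real) \<Rightarrow> 'b \<Rightarrow> 'b \<Rightarrow> real" where
  "barker_kernel G \<phi> \<pi> = orbit_kernel G \<phi> (\<lambda>x y. \<pi> y / (\<pi> x + \<pi> y))"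

end

theory Submission
  imports Defs
begin

text \<open>The Gibbs kernel G(x,-) is \<pi> conditioned on the orbit of x, so it depends on x only
  through its orbit. An orbit kernel K moves only within orbits and has row sums 1, so
  averaging G(y,-) over y \<sim> K(x,-) returns G(x,-): this is KG = G. Conversely,
  G(x,-) K is \<pi> restricted to the orbit, pushed through K and renormalised; if the
  acceptance function satisfies detailed balance with respect to \<pi> (as those of
  Metropolis-Hastings and Barker do), then \<pi> restricted to an orbit is K-stationary,
  which gives GK = G. Neither step needs \<pi> to be normalised, since G renormalises
  on each orbit.\<close>

lemma (in group_action) orbit_subset: "x \<in> E \<Longrightarrow> orbit G \<phi> x \<subseteq> E"
  using element_image by (auto simp: orbit_def)

lemma (in group_action) orbit_eq_if_mem:
  assumes "x \<in> E" "y \<in> orbit G \<phi> x"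
  shows "orbit G \<phi> y = orbit G \<phi> x"
proof -
  have "y \<in> E" and "x \<in> orbit G \<phi> y"
    using assms orbit_subset orbit_sym by auto
  then show ?thesis
    using assms orbit_subset orbit_trans by (meson subsetD subset_antisym subsetI)
qed

lemma orbit_kernel_eq_0_outside_orbit:
  assumes "x \<in> orbit G \<phi> x" "y \<notin> orbit G \<phi> x"
  shows "orbit_kernel G \<phi> acc x y = 0"
  using assms by (auto simp: orbit_kernel_def orbit_offdiag_def)

lemma orbit_kernel_row_sum:
  assumes "finite (orbit G \<phi> x)" "x \<in> orbit G \<phi> x"
  shows "(\<Sum>y\<in>orbit G \<phi> x. orbit_kernel G \<phi> acc x y) = 1"
proof -
  have "(\<Sum>y\<in>orbit G \<phi> x - {x}. orbit_kernel G \<phi> acc x y)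
      = (\<Sum>y\<in>orbit G \<phi> x - {x}. orbit_offdiag G \<phi> acc x y)"
    by (rule sum.cong) (auto simp: orbit_kernel_def)
  then show ?thesis
    using assms by (simp add: sum.remove orbit_kernel_def)
qed

lemma (in group_action) orbit_kernel_reversible:
  assumes "x \<in> E" "y \<in> orbit G \<phi> x"
    and balanced: "\<pi> x * acc x y = \<pi> y * acc y x"
  shows "\<pi> x * orbit_kernel G \<phi> acc x y = \<pi> y * orbit_kernel G \<phi> acc y x"
proof (cases "y = x")
  case False
  define c where "c = 1 / (real (card (orbit G \<phi> x)) - 1)"
  have "orbit G \<phi> y = orbit G \<phi> x" and "x \<in> orbit G \<phi> x"
    using orbit_eq_if_mem[OF assms(1,2)] orbit_refl[OF assms(1)] by auto
  then have "orbit_kernel G \<phi> acc x y = c * acc x y" and "orbit_kernel G \<phi> acc y x = c * acc y x"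
    using assms(2) False unfolding c_def orbit_kernel_def orbit_offdiag_def by auto
  then show ?thesis
    using balanced by (simp add: mult.left_commute)
qed simp

lemma (in group_action) orbit_restriction_stationary:
  assumes "finite E" "z \<in> E"
    and balanced: "\<And>y w. y \<in> E \<Longrightarrow> w \<in> E \<Longrightarrow> \<pi> y * acc y w = \<pi> w * acc w y"
  shows "(\<Sum>y\<in>orbit G \<phi> z. \<pi> y * orbit_kernel G \<phi> acc y z) = \<pi> z"
proof -
  let ?O = "orbit G \<phi> z"
  have "finite ?O" and "z \<in> ?O"
    using assms finite_subset[OF orbit_subset] orbit_refl by auto
  have "\<pi> y * orbit_kernel G \<phi> acc y z = \<pi> z * orbit_kernel G \<phi> acc z y" if "y \<in> ?O" for y
  proof -
    have "y \<in> E"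
      using that \<open>z \<in> E\<close> orbit_subset by blast
    from orbit_kernel_reversible[OF \<open>z \<in> E\<close> that balanced[OF \<open>z \<in> E\<close> this]]
    show ?thesis by simp
  qed
  then have "(\<Sum>y\<in>?O. \<pi> y * orbit_kernel G \<phi> acc y z)
      = \<pi> z * (\<Sum>y\<in>?O. orbit_kernel G \<phi> acc z y)"
    by (simp add: sum_distrib_left)
  also have "\<dots> = \<pi> z"
    using orbit_kernel_row_sum[OF \<open>finite ?O\<close> \<open>z \<in> ?O\<close>] by simp
  finally show ?thesis .
qed

lemma (in group_action) kernel_mult_orbit_kernel_gibbs:
  assumes "finite E" "x \<in> E"
  shows "kernel_mult E (orbit_kernel G \<phi> acc) (gibbs_kernel G \<phi> \<pi>) x z = gibbs_kernel G \<phi> \<pi> x z"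
proof -
  let ?O = "orbit G \<phi> x"
  have "?O \<subseteq> E" and "x \<in> ?O"
    using assms orbit_subset orbit_refl by auto
  then have "finite ?O"
    using assms finite_subset by blast
  have "kernel_mult E (orbit_kernel G \<phi> acc) (gibbs_kernel G \<phi> \<pi>) x z
      = (\<Sum>y\<in>?O. orbit_kernel G \<phi> acc x y * gibbs_kernel G \<phi> \<pi> y z)"
    unfolding kernel_mult_def using \<open>x \<in> ?O\<close>
    by (intro sum.mono_neutral_right[OF \<open>finite E\<close> \<open>?O \<subseteq> E\<close>])
      (auto simp: orbit_kernel_eq_0_outside_orbit)
  also have "\<dots> = (\<Sum>y\<in>?O. orbit_kernel G \<phi> acc x y * gibbs_kernel G \<phi> \<pi> x z)"
    using orbit_eq_if_mem[OF \<open>x \<in> E\<close>] by (intro sum.cong) (auto simp: gibbs_kernel_def)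
  also have "\<dots> = gibbs_kernel G \<phi> \<pi> x z"
    using orbit_kernel_row_sum[OF \<open>finite ?O\<close> \<open>x \<in> ?O\<close>] by (simp flip: sum_distrib_right)
  finally show ?thesis .
qed

lemma (in group_action) kernel_mult_gibbs_orbit_kernel:
  assumes "finite E" "x \<in> E" "z \<in> E"
    and balanced: "\<And>y w. y \<in> E \<Longrightarrow> w \<in> E \<Longrightarrow> \<pi> y * acc y w = \<pi> w * acc w y"
  shows "kernel_mult E (gibbs_kernel G \<phi> \<pi>) (orbit_kernel G \<phi> acc) x z = gibbs_kernel G \<phi> \<pi> x z"
proof -
  let ?O = "orbit G \<phi> x"
  have "?O \<subseteq> E"
    using assms orbit_subset by auto
  have "kernel_mult E (gibbs_kernel G \<phi> \<pi>) (orbit_kernel G \<phi> acc) x z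
      = (\<Sum>y\<in>?O. gibbs_kernel G \<phi> \<pi> x y * orbit_kernel G \<phi> acc y z)"
    unfolding kernel_mult_def
    by (intro sum.mono_neutral_right[OF \<open>finite E\<close> \<open>?O \<subseteq> E\<close>]) (auto simp: gibbs_kernel_def)
  also have "\<dots> = (\<Sum>y\<in>?O. \<pi> y * orbit_kernel G \<phi> acc y z) / (\<Sum>w\<in>?O. \<pi> w)"
    by (simp add: gibbs_kernel_def sum_divide_distrib)
  also have "\<dots> = gibbs_kernel G \<phi> \<pi> x z"
  proof (cases "z \<in> ?O")
    case True
    then have "?O = orbit G \<phi> z"
      using orbit_eq_if_mem[OF \<open>x \<in> E\<close>] by simp
    with True show ?thesis
      using orbit_restriction_stationary[OF \<open>finite E\<close> \<open>z \<in> E\<close> balanced]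
      by (simp add: gibbs_kernel_def)
  next
    case False
    have "orbit_kernel G \<phi> acc y z = 0" if "y \<in> ?O" for y
    proof (rule orbit_kernel_eq_0_outside_orbit)
      show "y \<in> orbit G \<phi> y"
        using that \<open>?O \<subseteq> E\<close> orbit_refl by blast
      show "z \<notin> orbit G \<phi> y"
        using that False orbit_eq_if_mem[OF \<open>x \<in> E\<close>] by simp
    qed
    with False show ?thesis
      by (simp add: gibbs_kernel_def)
  qed
  finally show ?thesis .
qed

lemma metropolis_acceptance_balanced:
  fixes a b :: real
  assumes "a > 0" "b > 0"
  shows "a * min 1 (b / a) = b * min 1 (a / b)"
proof -
  have "a * min 1 (b / a) = min a b" and "b * min 1 (a / b) = min b a"
    using assms by (simp_all add: min_def field_simps)
  then show ?thesis
    by (simp add: min.commute)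
qed

lemma barker_acceptance_balanced:
  fixes a b :: real
  shows "a * (b / (a + b)) = b * (a / (b + a))"
  by (simp add: add.commute mult.commute)

theorem lemma3p4:
  fixes G :: "('a, 'c) monoid_scheme" and X :: "'b set"
    and \<phi> :: "'a \<Rightarrow> 'b \<Rightarrow> 'b" and \<pi> :: "'b \<Rightarrow> real"
  assumes "finite X"
    and "group G"
    and "group_action G X \<phi>"
    and "\<And>x. x \<in> X \<Longrightarrow> \<pi> x > 0"
    and "(\<Sum>x\<in>X. \<pi> x) = 1"
    and "x \<in> X" and "z \<in> X"
  shows "kernel_mult X (gibbs_kernel G \<phi> \<pi>) (mh_kernel G \<phi> \<pi>) x z = gibbs_kernel G \<phi> \<pi> x z \<and>
         kernel_mult X (mh_kernel G \<phi> \<pi>) (gibbs_kernel G \<phi> \<pi>) x z = gibbs_kernel G \<phi> \<pi> x z \<and>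
         kernel_mult X (barker_kernel G \<phi> \<pi>) (gibbs_kernel G \<phi> \<pi>) x z = gibbs_kernel G \<phi> \<pi> x z \<and>
         kernel_mult X (gibbs_kernel G \<phi> \<pi>) (barker_kernel G \<phi> \<pi>) x z = gibbs_kernel G \<phi> \<pi> x z"
proof -
  interpret group_action G X \<phi> by fact
  have "\<pi> y * min 1 (\<pi> w / \<pi> y) = \<pi> w * min 1 (\<pi> y / \<pi> w)" if "y \<in> X" "w \<in> X" for y w
    using metropolis_acceptance_balanced assms(4) that by blast
  then show ?thesis
    unfolding mh_kernel_def barker_kernel_def
    using kernel_mult_orbit_kernel_gibbs[OF assms(1,6)]
      kernel_mult_gibbs_orbit_kernel[OF assms(1,6,7), where acc = "\<lambda>x y. min 1 (\<pi> y / \<pi> x)"]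
      kernel_mult_gibbs_orbit_kernel[OF assms(1,6,7) barker_acceptance_balanced]
    by blast
qed

end
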